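(* The regular $\mathcal J$-length of the stack monoid $\mathbb M$ satisfies $\mathrm{len}_{\mathcal J}(\mathbb M)\le \frac{|N|^2+|N|+2}{2}+2$.
   Context: Let $\mathcal{G}=(N,T,I,P,S)$ be an indexed grammar (finite non-terminals $N$, terminals $T$, stack symbols $I$, productions of the forms $A\to w$ with $w\in T^*$, $A\to BC$, $A\to Bf$, $Af\to B$). Fix, for every $X\subseteq N$, an arbitrary binary relation $\mathcal R_X$ on $N$ (in the paper, a reachability relation in an auxiliary grammar; the bound does not depend on it). The stack monoid $\mathbb M$ has elements: all tuples $(B,Y,M,A,X)$ with $A,B\in N$, $X,Y\subseteq N$, $M\in\mathbb B^{N\times N}$ (Boolean matrices with product over $(\vee,\wedge)$), plus a neutral element $\mathbf 1$ and an absorbing element $\mathbf 0$; product $(B_2,Y_2,M_2,A_2,X_2)\cdot(B_1,Y_1,M_1,A_1,X_1)=(B_2,Y_2,M_1M_2,A_1,X_1)$ if $X_2=Y_1$ and $B_1\,\mathcal R_{X_2}\,A_2$, and $\mathbf 0$ otherwise. In a finite monoid $\mathbf M$, $x\le_{\mathcal J}y$ iff $x=ayb$ for some $a,b\in\mathbf M$; $x<_{\mathcal J}y$ iff $x\le_{\mathcal J}y$ and not $y\le_{\mathcal J}x$. An element $e$ is idempotent if $ee=e$. The regular $\mathcal J$-length $\mathrm{len}_{\mathcal J}(\mathbf M)$ is the largest $k$ such that there exist idempotents $e_1>_{\mathcal J}e_2>_{\mathcal J}\cdots>_{\mathcal J}e_k$ in $\mathbf M$. *)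

theory Defs
  imports Complex_Main
begin

text \<open>Nonterminals are modelled by a finite type 'n (the set N is UNIV, |N| = CARD('n)).
  The family of relations R_X is a parameter R :: 'n set \<Rightarrow> 'n \<Rightarrow> 'n \<Rightarrow> bool,
  where R X B A means B R_X A.\<close>

datatype 'n stack_elem =
    SOne
  | SZero
  | SElt 'n "'n set" "'n \<Rightarrow> 'n \<Rightarrow> bool" 'n "'n set"

definition bmat_mult :: "('n \<Rightarrow> 'n \<Rightarrow> bool) \<Rightarrow> ('n \<Rightarrow> 'n \<Rightarrow> bool) \<Rightarrow> 'n \<Rightarrow> 'n \<Rightarrow> bool" where
  "bmat_mult M1 M2 = (\<lambda>i j. \<exists>k. M1 i k \<and> M2 k j)"

fun stack_mult :: "('n set \<Rightarrow> 'n \<Rightarrow> 'n \<Rightarrow> bool) \<Rightarrow> 'n stack_elem \<Rightarrow> 'n stack_elem \<Rightarrow> 'n stack_elem" where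
  "stack_mult R SOne y = y"
| "stack_mult R x SOne = x"
| "stack_mult R SZero y = SZero"
| "stack_mult R x SZero = SZero"
| "stack_mult R (SElt B2 Y2 M2 A2 X2) (SElt B1 Y1 M1 A1 X1) =
     (if X2 = Y1 \<and> R X2 B1 A2 then SElt B2 Y2 (bmat_mult M1 M2) A1 X1 else SZero)"

definition J_le :: "('m \<Rightarrow> 'm \<Rightarrow> 'm) \<Rightarrow> 'm \<Rightarrow> 'm \<Rightarrow> bool" where
  "J_le mult x y = (\<exists>a b. x = mult (mult a y) b)"

definition J_less :: "('m \<Rightarrow> 'm \<Rightarrow> 'm) \<Rightarrow> 'm \<Rightarrow> 'm \<Rightarrow> bool" where
  "J_less mult x y = (J_le mult x y \<and> \<not> J_le mult y x)"

definition idem :: "('m \<Rightarrow> 'm \<Rightarrow> 'm) \<Rightarrow> 'm \<Rightarrow> bool" where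
  "idem mult e = (mult e e = e)"

text \<open>Regular J-length: the largest k such that there are idempotents
  e_0 >_J e_1 >_J ... >_J e_(k-1). (For a finite monoid this set is finite, so Sup = Max.)\<close>

definition regular_J_length :: "('m \<Rightarrow> 'm \<Rightarrow> 'm) \<Rightarrow> nat" where
  "regular_J_length mult = Sup {k. \<exists>e :: nat \<Rightarrow> 'm.
      (\<forall>i<k. idem mult (e i)) \<and> (\<forall>i. Suc i < k \<longrightarrow> J_less mult (e (Suc i)) (e i))}"

end

theory Submission
  imports Defs
begin

text \<open>Apart from the neutral element on top and the absorbing element at the bottom, a J-chain of
  idempotents consists of tuples whose matrices M are idempotent Boolean matrices, i.e. transitive
  relations R with R \<subseteq> R O R. The reflexive points of M fall into strongly connected classes,
  which form a poset; count its antichains with one or two elements, at most n(n+1)/2 of them.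
  If A = X B Y with A and B idempotent, sending each reflexive point of A to a reflexive point of
  B through which the factorisation A = A X B B Y A routes it gives an order-reflecting injection
  of class posets. So the count of A is at most that of B, and equality forces an order
  isomorphism, which yields a factorisation B = P A Q. Hence the count strictly decreases along
  a strict J-chain of tuples, and the chain has at most n(n+1)/2 + 1 of them.\<close>

lemma strictly_decreasing_chain_length:
  fixes f :: "nat \<Rightarrow> nat"
  assumes decreasing: "\<And>i. Suc i < k \<Longrightarrow> f (Suc i) < f i" and bounded: "\<And>i. i < k \<Longrightarrow> f i \<le> m"
  shows "k \<le> m + 1"
proof -
  have "f i + i \<le> f 0" if "i < k" for i
    using that
  proof (induction i)
    case (Suc i)
    then show ?case using decreasing[of i] by simp
  qed simp
  then show ?thesis using bounded[of 0] by (cases k) fastforce+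
qed

lemma regular_J_length_le_rank_bound:
  fixes rank :: "'m \<Rightarrow> nat"
  assumes rank_J_less: "\<And>x y. idem mult x \<Longrightarrow> idem mult y \<Longrightarrow> J_less mult y x \<Longrightarrow> rank y < rank x"
    and rank_bound: "\<And>x. rank x \<le> m"
  shows "regular_J_length mult \<le> m + 1"
  unfolding regular_J_length_def
proof (rule cSup_least)
  fix k assume "k \<in> {k. \<exists>e :: nat \<Rightarrow> 'm. (\<forall>i<k. idem mult (e i))
    \<and> (\<forall>i. Suc i < k \<longrightarrow> J_less mult (e (Suc i)) (e i))}"
  then obtain e :: "nat \<Rightarrow> 'm" where idem: "\<forall>i<k. idem mult (e i)"
    and chain: "\<forall>i. Suc i < k \<longrightarrow> J_less mult (e (Suc i)) (e i)"
    by blast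
  show "k \<le> m + 1"
  proof (rule strictly_decreasing_chain_length[where f = "\<lambda>i. rank (e i)"])
    show "rank (e (Suc i)) < rank (e i)" if "Suc i < k" for i
      using that idem chain rank_J_less Suc_lessD by blast
  qed (rule rank_bound)
qed auto

text \<open>For antisymmetric r these are exactly the antichains of r with one or two elements.\<close>

definition small_antichains :: "('a \<Rightarrow> 'a \<Rightarrow> bool) \<Rightarrow> 'a set \<Rightarrow> 'a set set" where
  "small_antichains r C = {{a, b} | a b. a \<in> C \<and> b \<in> C \<and> (r a b \<longleftrightarrow> r b a)}"

lemma small_antichains_subset_Pow: "small_antichains r C \<subseteq> Pow C"
  by (auto simp: small_antichains_def)

lemma card_small_antichains_le:
  assumes "finite C"
  shows "2 * card (small_antichains r C) \<le> card C * (card C + 1)"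
proof -
  let ?n = "card C"
  have "small_antichains r C \<subseteq> {S. S \<subseteq> C \<and> card S = 1} \<union> {S. S \<subseteq> C \<and> card S = 2}"
    by (auto simp: small_antichains_def card_insert_if split: if_splits)
  then have "card (small_antichains r C) \<le> card ({S. S \<subseteq> C \<and> card S = 1} \<union> {S. S \<subseteq> C \<and> card S = 2})"
    by (rule card_mono[rotated]) (simp add: assms)
  also have "\<dots> \<le> card {S. S \<subseteq> C \<and> card S = 1} + card {S. S \<subseteq> C \<and> card S = 2}"
    by (rule card_Un_le)
  also have "\<dots> = ?n + (?n choose 2)"
    by (simp add: n_subsets assms)
  finally have "card (small_antichains r C) \<le> ?n + (?n choose 2)" .
  moreover have "2 * (?n choose 2) = ?n * (?n - 1)"
    using choose_two[of ?n] by (cases ?n) (simp_all add: dvd_div_mult_self)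
  moreover have "?n * (?n + 1) = ?n * (?n - 1) + 2 * ?n"
    by (cases ?n) simp_all
  ultimately show ?thesis by linarith
qed

locale order_reflecting_embedding =
  fixes r :: "'a \<Rightarrow> 'a \<Rightarrow> bool" and C :: "'a set"
    and s :: "'b \<Rightarrow> 'b \<Rightarrow> bool" and D :: "'b set"
    and g :: "'a \<Rightarrow> 'b"
  assumes finite_target: "finite D"
    and inj: "inj_on g C"
    and maps_into: "g ` C \<subseteq> D"
    and reflects: "\<And>a b. a \<in> C \<Longrightarrow> b \<in> C \<Longrightarrow> s (g a) (g b) \<Longrightarrow> r a b"
    and antisym: "\<And>a b. a \<in> C \<Longrightarrow> b \<in> C \<Longrightarrow> r a b \<Longrightarrow> r b a \<Longrightarrow> a = b"
begin

lemma image_small_antichains_subset: "image g ` small_antichains r C \<subseteq> small_antichains s D"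
proof
  fix V assume "V \<in> image g ` small_antichains r C"
  then obtain a b where V: "V = {g a, g b}" and "a \<in> C" "b \<in> C" and ab: "r a b \<longleftrightarrow> r b a"
    by (auto simp: small_antichains_def)
  have "s (g a) (g b) \<longleftrightarrow> s (g b) (g a)"
    using ab reflects antisym \<open>a \<in> C\<close> \<open>b \<in> C\<close> by metis
  with V \<open>a \<in> C\<close> \<open>b \<in> C\<close> maps_into show "V \<in> small_antichains s D"
    by (auto simp: small_antichains_def)
qed

lemma inj_on_image_small_antichains: "inj_on (image g) (small_antichains r C)"
  using inj_on_image_Pow[OF inj] small_antichains_subset_Pow by (rule inj_on_subset)

lemma card_small_antichains_mono: "card (small_antichains r C) \<le> card (small_antichains s D)"
  using finite_target small_antichains_subset_Pow
  by (intro card_inj_on_le[OF inj_on_image_small_antichains image_small_antichains_subset])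
    (auto intro: finite_subset)

context
  assumes card_eq: "card (small_antichains r C) = card (small_antichains s D)"
    and refl_target: "\<And>d. d \<in> D \<Longrightarrow> s d d"
begin

lemma image_small_antichains_eq: "image g ` small_antichains r C = small_antichains s D"
proof (rule card_subset_eq[OF _ image_small_antichains_subset])
  show "finite (small_antichains s D)"
    using finite_target small_antichains_subset_Pow by (auto intro: finite_subset)
qed (simp add: card_eq card_image[OF inj_on_image_small_antichains])

lemma image_eq_target: "g ` C = D"
proof
  show "D \<subseteq> g ` C"
  proof
    fix d assume "d \<in> D"
    then have "{d, d} \<in> small_antichains s D" unfolding small_antichains_def by blast
    then obtain U where U: "U \<in> small_antichains r C" "g ` U = {d}"
      by (auto simp: image_small_antichains_eq[symmetric])
    then have "U \<subseteq> C" using small_antichains_subset_Pow by blast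
    with U(2) show "d \<in> g ` C" by blast
  qed
qed (rule maps_into)

lemma preserves_order:
  assumes "a \<in> C" "b \<in> C" "r a b"
  shows "s (g a) (g b)"
proof (rule ccontr)
  assume not_s: "\<not> s (g a) (g b)"
  then have "a \<noteq> b" using refl_target maps_into \<open>a \<in> C\<close> by blast
  then have "\<not> s (g b) (g a)" using reflects antisym assms by blast
  with not_s maps_into assms have "{g a, g b} \<in> small_antichains s D"
    by (auto simp: small_antichains_def)
  then obtain U where U: "U \<in> small_antichains r C" "g ` U = g ` {a, b}"
    by (auto simp: image_small_antichains_eq[symmetric])
  moreover have "U \<subseteq> C" using U(1) small_antichains_subset_Pow by blast
  ultimately have "U = {a, b}"
    using inj_on_image_eq_iff[OF inj, of U "{a, b}"] assms by simp
  with U(1) have "r a b \<longleftrightarrow> r b a"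
    by (auto simp: small_antichains_def doubleton_eq_iff)
  with \<open>a \<noteq> b\<close> antisym assms show False by blast
qed

end

end

lemma bmat_mult_apply [simp]: "bmat_mult M1 M2 i j \<longleftrightarrow> (\<exists>k. M1 i k \<and> M2 k j)"
  by (simp add: bmat_mult_def)

lemma bmat_mult_assoc: "bmat_mult (bmat_mult M1 M2) M3 = bmat_mult M1 (bmat_mult M2 M3)"
  by (auto simp: fun_eq_iff)

lemma bmat_mult_id_left [simp]: "bmat_mult (=) M = M"
  by (auto simp: fun_eq_iff)

lemma bmat_mult_id_right [simp]: "bmat_mult M (=) = M"
  by (auto simp: fun_eq_iff)

definition scc :: "('n \<Rightarrow> 'n \<Rightarrow> bool) \<Rightarrow> 'n \<Rightarrow> 'n set" where
  "scc E i = {j. E i j \<and> E j i}"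

definition diag_classes :: "('n \<Rightarrow> 'n \<Rightarrow> bool) \<Rightarrow> 'n set set" where
  "diag_classes E = scc E ` {i. E i i}"

definition class_le :: "('n \<Rightarrow> 'n \<Rightarrow> bool) \<Rightarrow> 'n set \<Rightarrow> 'n set \<Rightarrow> bool" where
  "class_le E c c' \<longleftrightarrow> (\<exists>i\<in>c. \<exists>j\<in>c'. E i j)"

definition antichain_count :: "('n \<Rightarrow> 'n \<Rightarrow> bool) \<Rightarrow> nat" where
  "antichain_count E = card (small_antichains (class_le E) (diag_classes E))"

lemma class_le_refl: "c \<in> diag_classes E \<Longrightarrow> class_le E c c"
  by (auto simp: diag_classes_def class_le_def scc_def)

lemma antichain_count_bound:
  "2 * antichain_count (E :: 'n::finite \<Rightarrow> 'n \<Rightarrow> bool)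
     \<le> card (UNIV :: 'n set) * (card (UNIV :: 'n set) + 1)"
proof -
  have "card (diag_classes E) \<le> card {i. E i i}"
    unfolding diag_classes_def by (rule card_image_le) simp
  also have "\<dots> \<le> card (UNIV :: 'n set)" by (rule card_mono) simp_all
  finally have "card (diag_classes E) * (card (diag_classes E) + 1)
      \<le> card (UNIV :: 'n set) * (card (UNIV :: 'n set) + 1)"
    by (intro mult_le_mono) simp_all
  then show ?thesis
    using card_small_antichains_le[of "diag_classes E" "class_le E"]
    unfolding antichain_count_def by simp
qed

locale idempotent_bmat =
  fixes E :: "'n::finite \<Rightarrow> 'n \<Rightarrow> bool"
  assumes idem: "bmat_mult E E = E"
begin

lemma transitive: "E u w \<Longrightarrow> E w v \<Longrightarrow> E u v"
  by (metis idem bmat_mult_apply)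

lemma dense: "E u v \<Longrightarrow> \<exists>w. E u w \<and> E w v"
  by (metis idem bmat_mult_apply)

lemma through_diag:
  assumes "E u v"
  shows "\<exists>d. E d d \<and> E u d \<and> E d v"
proof (rule ccontr)
  assume no_diag: "\<not> ?thesis"
  let ?W = "{w. E u w \<and> E w v}"
  obtain w0 where "w0 \<in> ?W" using dense[OF \<open>E u v\<close>] by blast
  then obtain w where "w \<in> ?W" and least: "\<And>y. y \<in> ?W \<Longrightarrow> card {x. E x w} \<le> card {x. E x y}"
    using ex_has_least_nat[of "\<lambda>w. w \<in> ?W" w0 "\<lambda>w. card {x. E x w}"] by blast
  then obtain w' where "E u w'" "E w' w" using dense by blast
  with \<open>w \<in> ?W\<close> have "w' \<in> ?W" using transitive by blast
  have "{x. E x w'} \<subset> {x. E x w}"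
  proof
    show "{x. E x w'} \<subseteq> {x. E x w}" using transitive \<open>E w' w\<close> by blast
    show "{x. E x w'} \<noteq> {x. E x w}" using no_diag \<open>w' \<in> ?W\<close> \<open>E w' w\<close> by blast
  qed
  then have "card {x. E x w'} < card {x. E x w}" by (simp add: psubset_card_mono)
  with least[OF \<open>w' \<in> ?W\<close>] show False by simp
qed

lemma scc_eq_iff: "E i i \<Longrightarrow> E j j \<Longrightarrow> scc E i = scc E j \<longleftrightarrow> E i j \<and> E j i"
  unfolding scc_def using transitive by blast

lemma class_le_scc_iff: "E i i \<Longrightarrow> E j j \<Longrightarrow> class_le E (scc E i) (scc E j) \<longleftrightarrow> E i j"
  unfolding class_le_def scc_def using transitive by blast

lemma class_le_antisym:
  assumes "c \<in> diag_classes E" "c' \<in> diag_classes E" "class_le E c c'" "class_le E c' c"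
  shows "c = c'"
  using assms scc_eq_iff class_le_scc_iff unfolding diag_classes_def by blast

end

locale idempotent_factorization =
  A: idempotent_bmat A + B: idempotent_bmat B
  for A B :: "'n::finite \<Rightarrow> 'n \<Rightarrow> bool" +
  fixes X Y :: "'n \<Rightarrow> 'n \<Rightarrow> bool"
  assumes factor: "A = bmat_mult (bmat_mult X B) Y"
begin

text \<open>Since A = A X B B Y A, every loop A i i passes through some d with B d d.\<close>

definition passes_through :: "'n \<Rightarrow> 'n \<Rightarrow> bool" where
  "passes_through i d \<longleftrightarrow>
     B d d \<and> (\<exists>x y. A i x \<and> X x y \<and> B y d) \<and> (\<exists>y x. B d y \<and> Y y x \<and> A x i)"

definition lift :: "'n \<Rightarrow> 'n" where
  "lift i = (SOME d. passes_through i d)"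

lemma passes_through_exists:
  assumes "A i i"
  shows "\<exists>d. passes_through i d"
proof -
  obtain x x' where "A i x" "A x x'" "A x' i"
    using A.dense assms by metis
  moreover obtain y y' where "X x y" "B y y'" "Y y' x'"
    using \<open>A x x'\<close> by (auto simp: factor)
  moreover obtain d where "B d d" "B y d" "B d y'"
    using B.through_diag[OF \<open>B y y'\<close>] by blast
  ultimately show ?thesis unfolding passes_through_def by blast
qed

lemma passes_through_reflects:
  assumes "passes_through i d" "passes_through i' d'" "B d d'"
  shows "A i i'"
proof -
  obtain x y where "A i x" "X x y" "B y d" using assms(1) by (auto simp: passes_through_def)
  moreover obtain y' x' where "B d' y'" "Y y' x'" "A x' i'"
    using assms(2) by (auto simp: passes_through_def)
  moreover have "B y y'" using B.transitive \<open>B y d\<close> assms(3) \<open>B d' y'\<close> by blast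
  ultimately have "A i x" "A x x'" "A x' i'" by (auto simp: factor)
  then show ?thesis using A.transitive by blast
qed

lemma passes_through_lift: "A i i \<Longrightarrow> passes_through i (lift i)"
  unfolding lift_def by (rule someI_ex[OF passes_through_exists])

lemma lift_diag: "A i i \<Longrightarrow> B (lift i) (lift i)"
  using passes_through_lift by (simp add: passes_through_def)

lemma lift_reflects: "A i i \<Longrightarrow> A i' i' \<Longrightarrow> B (lift i) (lift i') \<Longrightarrow> A i i'"
  using passes_through_reflects passes_through_lift by blast

lemma lift_scc_invariant:
  assumes "A i i'" "A i' i"
  shows "lift i = lift i'"
proof -
  have "passes_through i = passes_through i'"
    using assms A.transitive unfolding passes_through_def by (intro ext) blast
  then show ?thesis by (simp add: lift_def)
qed

definition class_map :: "'n set \<Rightarrow> 'n set" where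
  "class_map c = scc B (lift (SOME i. i \<in> c))"

lemma class_map_scc:
  assumes "A i i"
  shows "class_map (scc A i) = scc B (lift i)"
proof -
  have "i \<in> scc A i" using assms by (simp add: scc_def)
  then have "(SOME j. j \<in> scc A i) \<in> scc A i" by (rule someI)
  then have "lift (SOME j. j \<in> scc A i) = lift i"
    unfolding scc_def by (blast intro: lift_scc_invariant)
  then show ?thesis by (simp add: class_map_def)
qed

lemma class_map_embedding:
  "order_reflecting_embedding (class_le A) (diag_classes A) (class_le B) (diag_classes B) class_map"
proof
  show "finite (diag_classes B)" by simp
  show "inj_on class_map (diag_classes A)"
  proof (rule inj_onI)
    fix c c' assume "c \<in> diag_classes A" "c' \<in> diag_classes A" "class_map c = class_map c'"
    then obtain i i' where i: "A i i" "A i' i'" "c = scc A i" "c' = scc A i'"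
      and "scc B (lift i) = scc B (lift i')"
      unfolding diag_classes_def by (auto simp: class_map_scc)
    then show "c = c'"
      using A.scc_eq_iff B.scc_eq_iff lift_diag lift_reflects by metis
  qed
  show "class_map ` diag_classes A \<subseteq> diag_classes B"
    by (auto simp: diag_classes_def class_map_scc lift_diag)
  show "class_le A c c'"
    if "c \<in> diag_classes A" "c' \<in> diag_classes A" "class_le B (class_map c) (class_map c')" for c c'
    using that A.class_le_scc_iff B.class_le_scc_iff lift_diag lift_reflects
    by (auto simp: diag_classes_def class_map_scc)
  show "c = c'"
    if "c \<in> diag_classes A" "c' \<in> diag_classes A" "class_le A c c'" "class_le A c' c" for c c'
    using A.class_le_antisym that .
qed

interpretation class_map: order_reflecting_embedding
  "class_le A" "diag_classes A" "class_le B" "diag_classes B" class_map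
  by (rule class_map_embedding)

lemma antichain_count_mono: "antichain_count A \<le> antichain_count B"
  unfolding antichain_count_def by (rule class_map.card_small_antichains_mono)

context
  assumes count_eq: "antichain_count A = antichain_count B"
begin

lemma lift_onto_classes:
  assumes "B d d"
  shows "\<exists>i. A i i \<and> B d (lift i) \<and> B (lift i) d"
proof -
  have "scc B d \<in> class_map ` diag_classes A"
    using class_map.image_eq_target[OF count_eq[unfolded antichain_count_def] class_le_refl] assms
    by (simp add: diag_classes_def)
  then obtain i where "A i i" "scc B d = scc B (lift i)"
    by (auto simp: diag_classes_def class_map_scc)
  then show ?thesis using B.scc_eq_iff assms lift_diag by blast
qed

lemma lift_mono:
  assumes "A i i" "A i' i'" "A i i'"
  shows "B (lift i) (lift i')"
proof -
  have "class_le A (scc A i) (scc A i')" using A.class_le_scc_iff assms by blast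
  then have "class_le B (class_map (scc A i)) (class_map (scc A i'))"
    using class_map.preserves_order[OF count_eq[unfolded antichain_count_def] class_le_refl] assms
    by (simp add: diag_classes_def)
  then show ?thesis
    using assms B.class_le_scc_iff lift_diag by (simp add: class_map_scc)
qed

lemma B_factors_through_A:
  "B = bmat_mult (bmat_mult (\<lambda>u i. A i i \<and> B u (lift i)) A) (\<lambda>i v. A i i \<and> B (lift i) v)"
  (is "B = ?PAQ")
proof (intro ext iffI)
  fix u v assume "B u v"
  then obtain d where "B d d" "B u d" "B d v" using B.through_diag by blast
  with lift_onto_classes obtain i where "A i i" "B d (lift i)" "B (lift i) d" by blast
  then have "B u (lift i)" "B (lift i) v" using \<open>B u d\<close> \<open>B d v\<close> B.transitive by blast+
  with \<open>A i i\<close> show "?PAQ u v" by auto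
next
  fix u v assume "?PAQ u v"
  then obtain i i' where "A i i" "A i' i'" "A i i'" "B u (lift i)" "B (lift i') v" by auto
  moreover have "B (lift i) (lift i')" using lift_mono calculation by blast
  ultimately show "B u v" using B.transitive by blast
qed

end

end

lemma stack_mult_SOne_right [simp]: "stack_mult R x SOne = x"
  by (cases x) auto

lemma stack_mult_SZero_left [simp]: "stack_mult R SZero y = SZero"
  by (cases y) auto

lemma stack_mult_SZero_right [simp]: "stack_mult R x SZero = SZero"
  by (cases x) auto

lemma stack_mult_eq_SOne_iff: "stack_mult R x y = SOne \<longleftrightarrow> x = SOne \<and> y = SOne"
  by (cases x; cases y) auto

lemma J_le_refl: "J_le (stack_mult R) x x"
  unfolding J_le_def by (metis stack_mult.simps(1) stack_mult_SOne_right)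

lemma J_le_SZeroD: "J_le (stack_mult R) x SZero \<Longrightarrow> x = SZero"
  by (auto simp: J_le_def)

lemma SOne_J_leD: "J_le (stack_mult R) SOne y \<Longrightarrow> y = SOne"
  unfolding J_le_def by (metis stack_mult_eq_SOne_iff)

lemma J_less_irrefl: "\<not> J_less (stack_mult R) x x"
  by (simp add: J_less_def J_le_refl)

lemma idem_SElt_iff:
  "idem (stack_mult R) (SElt B Y M A X) \<longleftrightarrow> X = Y \<and> R X B A \<and> bmat_mult M M = M"
  by (auto simp: idem_def)

fun mat :: "'n stack_elem \<Rightarrow> 'n \<Rightarrow> 'n \<Rightarrow> bool" where
  "mat SOne = (=)"
| "mat SZero = (\<lambda>_ _. False)"
| "mat (SElt B Y M A X) = M"

lemma mat_stack_mult:
  "stack_mult R x y \<noteq> SZero \<Longrightarrow> mat (stack_mult R x y) = bmat_mult (mat y) (mat x)"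
  by (cases x; cases y) (auto split: if_splits)

lemma J_le_imp_mat_factor:
  assumes "J_le (stack_mult R) x y" "x \<noteq> SZero"
  shows "\<exists>P Q. mat x = bmat_mult (bmat_mult P (mat y)) Q"
proof -
  obtain a b where x: "x = stack_mult R (stack_mult R a y) b"
    using assms(1) by (auto simp: J_le_def)
  then have "stack_mult R a y \<noteq> SZero" using assms(2) by auto
  then have "mat x = bmat_mult (bmat_mult (mat b) (mat y)) (mat a)"
    using x assms(2) by (simp add: mat_stack_mult bmat_mult_assoc)
  then show ?thesis by blast
qed

lemma mat_factor_imp_J_le:
  assumes "idem (stack_mult R) (SElt B' Y' M' A' X')"
  shows "J_le (stack_mult R) (SElt B Y (bmat_mult (bmat_mult P M') Q) A X) (SElt B' Y' M' A' X')"
proof -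
  have "stack_mult R (stack_mult R (SElt B Y Q A' X') (SElt B' Y' M' A' X')) (SElt B' X' P A X)
      = SElt B Y (bmat_mult (bmat_mult P M') Q) A X"
    using assms by (auto simp: idem_SElt_iff bmat_mult_assoc)
  then show ?thesis unfolding J_le_def by metis
qed

lemma antichain_count_J_less:
  fixes M M' :: "'n::finite \<Rightarrow> 'n \<Rightarrow> bool"
  assumes idem_x: "idem (stack_mult R) (SElt B Y M A X)"
    and idem_y: "idem (stack_mult R) (SElt B' Y' M' A' X')"
    and less: "J_less (stack_mult R) (SElt B' Y' M' A' X') (SElt B Y M A X)"
  shows "antichain_count M' < antichain_count M"
proof -
  have "J_le (stack_mult R) (SElt B' Y' M' A' X') (SElt B Y M A X)"
    using less by (simp add: J_less_def)
  from J_le_imp_mat_factor[OF this] obtain P Q where "M' = bmat_mult (bmat_mult P M) Q"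
    by auto
  then interpret idempotent_factorization M' M P Q
    using idem_x idem_y by unfold_locales (simp_all add: idem_SElt_iff)
  have "antichain_count M' \<noteq> antichain_count M"
  proof
    assume "antichain_count M' = antichain_count M"
    then have "J_le (stack_mult R) (SElt B Y M A X) (SElt B' Y' M' A' X')"
      using mat_factor_imp_J_le[OF idem_y, of B Y "\<lambda>u i. M' i i \<and> M u (lift i)"
          "\<lambda>i v. M' i i \<and> M (lift i) v" A X]
      by (simp only: B_factors_through_A[symmetric])
    with less show False by (simp add: J_less_def)
  qed
  with antichain_count_mono show ?thesis by simp
qed

fun stack_rank :: "'n::finite stack_elem \<Rightarrow> nat" where
  "stack_rank SOne = card (UNIV :: 'n set) * (card (UNIV :: 'n set) + 1) div 2 + 2"
| "stack_rank SZero = 0"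
| "stack_rank (SElt B Y M A X) = antichain_count M + 1"

lemma stack_rank_less_SOne:
  fixes x :: "'n::finite stack_elem"
  shows "x \<noteq> SOne \<Longrightarrow> stack_rank x < stack_rank (SOne :: 'n stack_elem)"
proof (cases x)
  case (SElt B Y M A X)
  have "antichain_count M \<le> card (UNIV :: 'n set) * (card (UNIV :: 'n set) + 1) div 2"
    using div_le_mono[OF antichain_count_bound[of M], of 2] by simp
  with SElt show ?thesis by simp
qed simp_all

lemma stack_rank_le_SOne:
  fixes x :: "'n::finite stack_elem"
  shows "stack_rank x \<le> stack_rank (SOne :: 'n stack_elem)"
  using stack_rank_less_SOne[of x] by (cases "x = SOne") auto

lemma stack_rank_J_less:
  fixes x y :: "'n::finite stack_elem"
  assumes "idem (stack_mult R) x" "idem (stack_mult R) y" "J_less (stack_mult R) y x"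
  shows "stack_rank y < stack_rank x"
proof (cases x)
  case SOne
  with assms(3) have "y \<noteq> SOne" using J_less_irrefl by blast
  with SOne show ?thesis using stack_rank_less_SOne by metis
next
  case SZero
  then show ?thesis using assms(3) J_le_SZeroD J_less_irrefl by (metis J_less_def)
next
  case (SElt B Y M A X)
  show ?thesis
  proof (cases y)
    case SOne
    then show ?thesis using assms(3) SElt SOne_J_leD unfolding J_less_def by blast
  next
    case (SElt B' Y' M' A' X')
    then show ?thesis using assms antichain_count_J_less \<open>x = SElt B Y M A X\<close> by simp
  qed (simp add: SElt)
qed

theorem mainTheorem15:
  fixes R :: "('n::finite) set \<Rightarrow> 'n \<Rightarrow> 'n \<Rightarrow> bool"
  shows "real (regular_J_length (stack_mult R))
           \<le> (real (card (UNIV :: 'n set))^2 + real (card (UNIV :: 'n set)) + 2) / 2 + 2"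
proof -
  let ?n = "card (UNIV :: 'n set)"
  have "regular_J_length (stack_mult R) \<le> stack_rank (SOne :: 'n stack_elem) + 1"
    using stack_rank_J_less stack_rank_le_SOne by (rule regular_J_length_le_rank_bound)
  then have "real (regular_J_length (stack_mult R)) \<le> real (?n * (?n + 1) div 2) + 3"
    by simp
  also have "\<dots> \<le> real (?n * (?n + 1)) / 2 + 3"
    using of_nat_div_le_of_nat[of "?n * (?n + 1)" 2] by simp
  also have "\<dots> = (real ?n ^ 2 + real ?n + 2) / 2 + 2"
    by (simp add: power2_eq_square algebra_simps)
  finally show ?thesis .
qed

end
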